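(* Let $t^k_{\alpha\beta}=\operatorname{tr}(W_\alpha V_\beta Z^k)=V_\beta Z^kW_\alpha$ for $k\in\mathbb N$, $\alpha,\beta\in\{1,\dots,d\}$, regarded as regular functions on $\mathcal C^\times_{n,d,q}$. Then (1) $\{\operatorname{tr}Z^i,t^k_{\beta\alpha}\}=0$ for all $i\ge1$, $k\ge0$ and all $\alpha,\beta$; (2) for all $\alpha,\beta,\gamma,\epsilon$ and $k,l\ge1$, $$\begin{aligned}\{t^k_{\gamma\epsilon},t^l_{\alpha\beta}\}=&\tfrac12[o(\gamma,\beta)+o(\epsilon,\alpha)-o(\epsilon,\beta)-o(\gamma,\alpha)]t^k_{\gamma\epsilon}t^l_{\alpha\beta}+\tfrac12o(\gamma,\beta)t^{k+l}_{\alpha\epsilon}t^0_{\gamma\beta}+\tfrac12o(\epsilon,\alpha)t^0_{\alpha\epsilon}t^{k+l}_{\gamma\beta}\\&-\tfrac12o(\epsilon,\beta)t^l_{\alpha\epsilon}t^k_{\gamma\beta}-\tfrac12o(\gamma,\alpha)t^k_{\alpha\epsilon}t^l_{\gamma\beta}-\delta_{\gamma\beta}\big[t^{k+l}_{\alpha\epsilon}+\tfrac12t^{k+l}_{\alpha\epsilon}t^0_{\gamma\beta}+\tfrac12t^k_{\gamma\epsilon}t^l_{\alpha\beta}\big]\\&+\delta_{\alpha\epsilon}\big[t^{k+l}_{\gamma\beta}+\tfrac12t^0_{\alpha\epsilon}t^{k+l}_{\gamma\beta}+\tfrac12t^k_{\gamma\epsilon}t^l_{\alpha\beta}\big]\\&+\tfrac12\Big[\sum_{\tau=1}^kt^{k-\tau}_{\gamma\beta}t^{l+\tau}_{\alpha\epsilon}-\sum_{\tau=1}^{k-1}t^{k+l-\tau}_{\gamma\beta}t^\tau_{\alpha\epsilon}\Big]-\tfrac12\Big[\sum_{\sigma=1}^lt^{k+\sigma}_{\gamma\beta}t^{l-\sigma}_{\alpha\epsilon}-\sum_{\sigma=1}^{l-1}t^\sigma_{\gamma\beta}t^{k+l-\sigma}_{\alpha\epsilon}\Big],\end{aligned}$$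 and this formula remains valid when $k=0$ or $l=0$ (or both) provided the final four sums are omitted.
   Context: Fix integers $n\ge1$, $d\ge1$ and $q\in\mathbb C^\times$ not a root of unity. Greek indices range over $\{1,\dots,d\}$; set $o(\alpha,\beta)=0$ if $\alpha=\beta$, $o(\alpha,\beta)=1$ if $\alpha<\beta$, $o(\alpha,\beta)=-1$ if $\alpha>\beta$. Let $\mathcal M^\times_{n,d,q}$ be the affine variety of tuples $(X,Z,V_1,\dots,V_d,W_1,\dots,W_d)$ with $X,Z\in\mathrm{GL}_n(\mathbb C)$, $V_\alpha\in\mathrm{Mat}_{1\times n}(\mathbb C)$, $W_\alpha\in\mathrm{Mat}_{n\times 1}(\mathbb C)$, such that every $\mathrm{Id}_n+W_\alpha V_\alpha$ is invertible and $XZX^{-1}Z^{-1}(\mathrm{Id}_n+W_1V_1)^{-1}\cdots(\mathrm{Id}_n+W_dV_d)^{-1}=q\,\mathrm{Id}_n$. $\mathrm{GL}_n$ acts by $g\cdot(X,Z,V_\alpha,W_\alpha)=(gXg^{-1},gZg^{-1},V_\alpha g^{-1},gW_\alpha)$; the action is free and $\mathcal C^\times_{n,d,q}=\mathcal M^\times_{n,d,q}/\!/\mathrm{GL}_n$ is a smooth affine variety of dimension $2nd$ with $\mathbb C[\mathcal C^\times_{n,d,q}]=\mathbb C[\mathcal M^\times_{n,d,q}]^{\mathrm{GL}_n}$. Write $V_{\alpha,j}$, $W_{\alpha,k}$ for the entries. Let $\{-,-\}$ be the antisymmetric biderivation on functions of $(X,Z,V_\alpha,W_\alpha)$ (Van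 den Bergh's quasi-Poisson bracket) given by $\{X_{ij},X_{kl}\}=\tfrac12(\delta_{il}(X^2)_{kj}-\delta_{kj}(X^2)_{il})$, $\{Z_{ij},Z_{kl}\}=\tfrac12(\delta_{kj}(Z^2)_{il}-\delta_{il}(Z^2)_{kj})$, $\{X_{ij},Z_{kl}\}=\tfrac12((ZX)_{kj}\delta_{il}+\delta_{kj}(XZ)_{il}+Z_{kj}X_{il}-X_{kj}Z_{il})$, $\{U_{ij},W_{\alpha,k}\}=\tfrac12(\delta_{kj}(UW_\alpha)_i-U_{kj}W_{\alpha,i})$, $\{U_{ij},V_{\alpha,l}\}=\tfrac12((V_\alpha U)_j\delta_{il}-V_{\alpha,j}U_{il})$ for $U\in\{X,Z\}$, $\{V_{\alpha,j},V_{\beta,l}\}=\tfrac12 o(\beta,\alpha)(V_{\beta,j}V_{\alpha,l}+V_{\alpha,j}V_{\beta,l})$, $\{W_{\alpha,i},W_{\beta,k}\}=\tfrac12 o(\beta,\alpha)(W_{\beta,k}W_{\alpha,i}+W_{\alpha,k}W_{\beta,i})$, $\{V_{\alpha,j},W_{\beta,k}\}=\delta_{\alpha\beta}(\delta_{kj}+\tfrac12W_{\alpha,k}V_{\alpha,j}+\tfrac12\delta_{kj}V_\alpha W_\alpha)+\tfrac12 o(\alpha,\beta)(\delta_{kj}V_\alpha W_\beta+W_{\beta,k}V_{\alpha,j})$. Restricted to $\mathrm{GL}_n$-invariant functions this bracket induces a non-degenerate Poisson bracket on $\mathcal C^\times_{n,d,q}$ (quasi-Hamiltonian reduction); this is the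 Poisson bracket $\{-,-\}$ on $\mathcal C^\times_{n,d,q}$. *)

theory Defs
  imports "HOL-Analysis.Derivative" "Jordan_Normal_Form.Matrix"
begin

text \<open>Coordinates on the ambient space of tuples (X, Z, V_1..V_d, W_1..W_d).
  Xc i j = X_ij, Zc i j = Z_ij (matrix indices 0..<n), Vc a j = V_{a,j},
  Wc a k = W_{a,k} (a in 1..d, entry index 0..<n).\<close>
datatype coord = Xc nat nat | Zc nat nat | Vc nat nat | Wc nat nat

type_synonym point = "coord \<Rightarrow> complex"

definition coords :: "nat \<Rightarrow> nat \<Rightarrow> coord set" where
  "coords n d =
     (\<lambda>(i,j). Xc i j) ` ({..<n} \<times> {..<n}) \<union>
     (\<lambda>(i,j). Zc i j) ` ({..<n} \<times> {..<n}) \<union>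
     (\<lambda>(a,j). Vc a j) ` ({1..d} \<times> {..<n}) \<union>
     (\<lambda>(a,j). Wc a j) ` ({1..d} \<times> {..<n})"

definition ord_sign :: "nat \<Rightarrow> nat \<Rightarrow> complex" where
  "ord_sign a b = (if a = b then 0 else if a < b then 1 else -1)"

definition kd :: "nat \<Rightarrow> nat \<Rightarrow> complex" where
  "kd i j = (if i = j then 1 else 0)"

definition xf :: "point \<Rightarrow> nat \<Rightarrow> nat \<Rightarrow> complex" where "xf p i j = p (Xc i j)"
definition zf :: "point \<Rightarrow> nat \<Rightarrow> nat \<Rightarrow> complex" where "zf p i j = p (Zc i j)"
definition vf :: "point \<Rightarrow> nat \<Rightarrow> nat \<Rightarrow> complex" where "vf p a j = p (Vc a j)"
definition wf :: "point \<Rightarrow> nat \<Rightarrow> nat \<Rightarrow> complex" where "wf p a k = p (Wc a k)"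

definition mm :: "nat \<Rightarrow> (nat \<Rightarrow> nat \<Rightarrow> complex) \<Rightarrow> (nat \<Rightarrow> nat \<Rightarrow> complex) \<Rightarrow> nat \<Rightarrow> nat \<Rightarrow> complex" where
  "mm n A B i j = (\<Sum>m<n. A i m * B m j)"

definition UWv :: "nat \<Rightarrow> (nat \<Rightarrow> nat \<Rightarrow> complex) \<Rightarrow> point \<Rightarrow> nat \<Rightarrow> nat \<Rightarrow> complex" where
  "UWv n U p a i = (\<Sum>m<n. U i m * wf p a m)"
definition VUv :: "nat \<Rightarrow> (nat \<Rightarrow> nat \<Rightarrow> complex) \<Rightarrow> point \<Rightarrow> nat \<Rightarrow> nat \<Rightarrow> complex" where
  "VUv n U p a j = (\<Sum>m<n. vf p a m * U m j)"
definition VW :: "nat \<Rightarrow> point \<Rightarrow> nat \<Rightarrow> nat \<Rightarrow> complex" where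
  "VW n p a b = (\<Sum>m<n. vf p a m * wf p b m)"

definition brUW :: "nat \<Rightarrow> (nat \<Rightarrow> nat \<Rightarrow> complex) \<Rightarrow> point \<Rightarrow> nat \<Rightarrow> nat \<Rightarrow> nat \<Rightarrow> nat \<Rightarrow> complex" where
  "brUW n U p i j a k = (1/2) * (kd k j * UWv n U p a i - U k j * wf p a i)"
definition brUV :: "nat \<Rightarrow> (nat \<Rightarrow> nat \<Rightarrow> complex) \<Rightarrow> point \<Rightarrow> nat \<Rightarrow> nat \<Rightarrow> nat \<Rightarrow> nat \<Rightarrow> complex" where
  "brUV n U p i j a l = (1/2) * (VUv n U p a j * kd i l - vf p a j * U i l)"

definition brXZ :: "nat \<Rightarrow> point \<Rightarrow> nat \<Rightarrow> nat \<Rightarrow> nat \<Rightarrow> nat \<Rightarrow> complex" where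
  "brXZ n p i j k l = (1/2) * (mm n (zf p) (xf p) k j * kd i l + kd k j * mm n (xf p) (zf p) i l
      + zf p k j * xf p i l - xf p k j * zf p i l)"

definition brVW :: "nat \<Rightarrow> point \<Rightarrow> nat \<Rightarrow> nat \<Rightarrow> nat \<Rightarrow> nat \<Rightarrow> complex" where
  "brVW n p a j b k = kd a b * (kd k j + (1/2) * wf p a k * vf p a j + (1/2) * kd k j * VW n p a a)
      + (1/2) * ord_sign a b * (kd k j * VW n p a b + wf p b k * vf p a j)"

text \<open>Van den Bergh's quasi-Poisson bracket on pairs of coordinate functions,
  evaluated at the point p (antisymmetric by construction).\<close>
fun qpb :: "nat \<Rightarrow> point \<Rightarrow> coord \<Rightarrow> coord \<Rightarrow> complex" where
  "qpb n p (Xc i j) (Xc k l) = (1/2) * (kd i l * mm n (xf p) (xf p) k j - kd k j * mm n (xf p) (xf p) i l)"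
| "qpb n p (Zc i j) (Zc k l) = (1/2) * (kd k j * mm n (zf p) (zf p) i l - kd i l * mm n (zf p) (zf p) k j)"
| "qpb n p (Xc i j) (Zc k l) = brXZ n p i j k l"
| "qpb n p (Zc k l) (Xc i j) = - brXZ n p i j k l"
| "qpb n p (Xc i j) (Wc a k) = brUW n (xf p) p i j a k"
| "qpb n p (Wc a k) (Xc i j) = - brUW n (xf p) p i j a k"
| "qpb n p (Zc i j) (Wc a k) = brUW n (zf p) p i j a k"
| "qpb n p (Wc a k) (Zc i j) = - brUW n (zf p) p i j a k"
| "qpb n p (Xc i j) (Vc a l) = brUV n (xf p) p i j a l"
| "qpb n p (Vc a l) (Xc i j) = - brUV n (xf p) p i j a l"
| "qpb n p (Zc i j) (Vc a l) = brUV n (zf p) p i j a l"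
| "qpb n p (Vc a l) (Zc i j) = - brUV n (zf p) p i j a l"
| "qpb n p (Vc a j) (Vc b l) = (1/2) * ord_sign b a * (vf p b j * vf p a l + vf p a j * vf p b l)"
| "qpb n p (Wc a i) (Wc b k) = (1/2) * ord_sign b a * (wf p b k * wf p a i + wf p a k * wf p b i)"
| "qpb n p (Vc a j) (Wc b k) = brVW n p a j b k"
| "qpb n p (Wc b k) (Vc a j) = - brVW n p a j b k"

definition pd :: "(point \<Rightarrow> complex) \<Rightarrow> point \<Rightarrow> coord \<Rightarrow> complex" where
  "pd f p c = deriv (\<lambda>t. f (p(c := p c + t))) 0"

definition pbr :: "nat \<Rightarrow> nat \<Rightarrow> (point \<Rightarrow> complex) \<Rightarrow> (point \<Rightarrow> complex) \<Rightarrow> point \<Rightarrow> complex" where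
  "pbr n d f g p = (\<Sum>a\<in>coords n d. \<Sum>b\<in>coords n d. pd f p a * pd g p b * qpb n p a b)"

definition Xm :: "nat \<Rightarrow> point \<Rightarrow> complex mat" where "Xm n p = mat n n (\<lambda>(i,j). p (Xc i j))"
definition Zm :: "nat \<Rightarrow> point \<Rightarrow> complex mat" where "Zm n p = mat n n (\<lambda>(i,j). p (Zc i j))"
definition Vm :: "nat \<Rightarrow> point \<Rightarrow> nat \<Rightarrow> complex mat" where "Vm n p a = mat 1 n (\<lambda>(_,j). p (Vc a j))"
definition Wm :: "nat \<Rightarrow> point \<Rightarrow> nat \<Rightarrow> complex mat" where "Wm n p a = mat n 1 (\<lambda>(i,_). p (Wc a i))"

definition Am :: "nat \<Rightarrow> point \<Rightarrow> nat \<Rightarrow> complex mat" where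
  "Am n p a = 1\<^sub>m n + Wm n p a * Vm n p a"

definition minv :: "complex mat \<Rightarrow> complex mat" where
  "minv A = (SOME B. inverts_mat A B \<and> inverts_mat B A)"

definition mtrace :: "complex mat \<Rightarrow> complex" where
  "mtrace A = (\<Sum>i<dim_row A. A $$ (i,i))"

definition Mx :: "nat \<Rightarrow> nat \<Rightarrow> complex \<Rightarrow> point set" where
  "Mx n d q = {p. invertible_mat (Xm n p) \<and> invertible_mat (Zm n p) \<and>
      (\<forall>a\<in>{1..d}. invertible_mat (Am n p a)) \<and>
      Xm n p * Zm n p * minv (Xm n p) * minv (Zm n p) *
        foldl (\<lambda>M a. M * minv (Am n p a)) (1\<^sub>m n) [1..<d+1] = q \<cdot>\<^sub>m 1\<^sub>m n}"

definition trZ :: "nat \<Rightarrow> nat \<Rightarrow> point \<Rightarrow> complex" where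
  "trZ n i p = mtrace (Zm n p ^\<^sub>m i)"

definition tf :: "nat \<Rightarrow> nat \<Rightarrow> nat \<Rightarrow> nat \<Rightarrow> point \<Rightarrow> complex" where
  "tf n k a b p = (\<Sum>j<n. \<Sum>l<n. p (Vc b j) * (Zm n p ^\<^sub>m k) $$ (j,l) * p (Wc a l))"

end

theory Submission
  imports Defs
begin

text \<open>Both identities hold at every point of the ambient space and follow by direct computation.
  The gradient of t^k_ab = V_b Z^k W_a is Z^k W_a along V_b, V_b Z^k along W_a, and along Z the sum
  over m < k of the rank-one matrices (V_b Z^m)^T (Z^(k-1-m) W_a). Splitting the biderivation into its
  nine blocks of Z-, V- and W-coordinates, every block contracts a bracket of coordinates against
  rank-one tensors and is therefore bilinear in the t's. Writing T x = t^x_\<gamma>\<beta> and U x = t^x_\<alpha>\<epsilon>, each of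
  the four blocks mixing Z with V or W telescopes to two products, and together they cancel; the Z-Z
  block is a double sum of differences w j - w (j+2) of the sequence w j = T j * U (k+l-j), which
  telescopes to the four sums of the formula; the V- and W-blocks give the remaining terms.
  The gradient of tr Z^i is i (Z^(i-1))^T, which commutes with Z, so its bracket with every Z-, V- and
  W-coordinate vanishes.\<close>

section \<open>Finite sums\<close>

lemma kd_times: "kd i j * x = (if i = j then x else 0)"
  by (simp add: kd_def)

lemma times_kd: "x * kd i j = (if i = j then x else 0)"
  by (simp add: kd_def)

lemma if_zero_times: "(if P then a else 0) * (z::'a::mult_zero) = (if P then a * z else 0)"
  by simp

lemma times_if_zero: "(z::'a::mult_zero) * (if P then a else 0) = (if P then z * a else 0)"
  by simp

lemma if_zero_divide: "(if P then a else 0) / (z::'a::division_ring) = (if P then a / z else 0)"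
  by simp

lemma minus_if_zero: "- (if P then a else 0) = (if P then - a else (0::'a::group_add))"
  by simp

lemma sum_if_zero: "(\<Sum>x\<in>A. if P then f x else 0) = (if P then sum f A else 0)"
  by simp

lemmas delta_simps = kd_times times_kd if_zero_times times_if_zero if_zero_divide minus_if_zero sum_if_zero

lemma sum_move_innermost_out_2: "(\<Sum>u\<in>U. \<Sum>v\<in>V. \<Sum>m\<in>M. f m u v) = (\<Sum>m\<in>M. \<Sum>u\<in>U. \<Sum>v\<in>V. f m u v)"
proof -
  have "(\<Sum>u\<in>U. \<Sum>v\<in>V. \<Sum>m\<in>M. f m u v) = (\<Sum>u\<in>U. \<Sum>m\<in>M. \<Sum>v\<in>V. f m u v)"
    by (rule sum.cong[OF refl], rule sum.swap)
  then show ?thesis by (simp only: sum.swap[of _ U])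
qed

lemma sum_move_innermost_out_3:
  "(\<Sum>t\<in>T. \<Sum>u\<in>U. \<Sum>v\<in>V. \<Sum>m\<in>M. f m t u v) = (\<Sum>m\<in>M. \<Sum>t\<in>T. \<Sum>u\<in>U. \<Sum>v\<in>V. f m t u v)"
proof -
  have "(\<Sum>t\<in>T. \<Sum>u\<in>U. \<Sum>v\<in>V. \<Sum>m\<in>M. f m t u v) = (\<Sum>t\<in>T. \<Sum>m\<in>M. \<Sum>u\<in>U. \<Sum>v\<in>V. f m t u v)"
    by (rule sum.cong[OF refl], rule sum_move_innermost_out_2)
  then show ?thesis by (simp only: sum.swap[of _ T])
qed

lemma sum_move_innermost_out_4:
  "(\<Sum>s\<in>S. \<Sum>t\<in>T. \<Sum>u\<in>U. \<Sum>v\<in>V. \<Sum>m\<in>M. f m s t u v)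
   = (\<Sum>m\<in>M. \<Sum>s\<in>S. \<Sum>t\<in>T. \<Sum>u\<in>U. \<Sum>v\<in>V. f m s t u v)"
proof -
  have "(\<Sum>s\<in>S. \<Sum>t\<in>T. \<Sum>u\<in>U. \<Sum>v\<in>V. \<Sum>m\<in>M. f m s t u v)
      = (\<Sum>s\<in>S. \<Sum>m\<in>M. \<Sum>t\<in>T. \<Sum>u\<in>U. \<Sum>v\<in>V. f m s t u v)"
    by (rule sum.cong[OF refl], rule sum_move_innermost_out_3)
  then show ?thesis by (simp only: sum.swap[of _ S])
qed

lemma sum_telescope_mult:
  fixes f g :: "nat \<Rightarrow> 'a::comm_ring"
  shows "(\<Sum>m<k. f (k - m) * g m - f (k - Suc m) * g (Suc m)) = f k * g 0 - f 0 * g k"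
  using sum_lessThan_telescope'[of "\<lambda>m. f (k - m) * g m" k] by simp

lemma sum_lessThan_shift:
  fixes f :: "nat \<Rightarrow> 'a::ab_group_add"
  shows "(\<Sum>i<x. f (c + i)) = (\<Sum>i<c + x. f i) - (\<Sum>i<c. f i)"
  by (induction x) (simp_all add: algebra_simps)

lemma sum_lessThan_telescope_step2:
  fixes f :: "nat \<Rightarrow> 'a::ab_group_add"
  shows "(\<Sum>r<l. f (a + r) - f (a + r + 2)) = f a + f (a + 1) - f (a + l) - f (a + l + 1)"
  by (induction l) (simp_all add: algebra_simps)

lemma double_sum_telescope_step2:
  fixes w :: "nat \<Rightarrow> 'a::ab_group_add"
  assumes "k \<ge> 1" and "l \<ge> 1"
  shows "(\<Sum>a<k. \<Sum>r<l. w (a + r) - w (a + r + 2))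
       = (\<Sum>i<k. w i) - (\<Sum>i<k-1. w (l + 1 + i)) - (\<Sum>i<l. w (k + 1 + i)) + (\<Sum>i<l-1. w (1 + i))"
proof -
  define P where "P x = (\<Sum>i<x. w i)" for x
  have shift: "(\<Sum>i<x. w (c + i)) = P (c + x) - P c" for c x
    unfolding P_def by (rule sum_lessThan_shift)
  have "(\<Sum>a<k. \<Sum>r<l. w (a + r) - w (a + r + 2))
      = (\<Sum>a<k. w (0 + a) + w (1 + a) - w (l + a) - w (l + 1 + a))"
    by (simp only: sum_lessThan_telescope_step2) (simp add: ac_simps)
  also have "\<dots> = P k + (P (1 + k) - P 1) - (P (l + k) - P l) - (P (l + 1 + k) - P (l + 1))"
    unfolding sum.distrib sum_subtractf shift by (simp add: P_def)
  also have "\<dots> = P k - (P (l + 1 + (k - 1)) - P (l + 1)) - (P (k + 1 + l) - P (k + 1))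
                  + (P (1 + (l - 1)) - P 1)"
    using assms by (cases k; cases l) (simp_all add: algebra_simps)
  finally show ?thesis by (simp only: shift P_def[symmetric])
qed

lemma double_sum_telescope:
  fixes T U :: "nat \<Rightarrow> 'a::comm_ring"
  assumes "k \<ge> 1" and "l \<ge> 1"
  shows "(\<Sum>m<k. \<Sum>r<l. U (m + 2 + (l - 1 - r)) * T (r + (k - 1 - m))
                         - U (m + (l - 1 - r)) * T (r + 2 + (k - 1 - m)))
       = ((\<Sum>\<tau>=1..k. T (k - \<tau>) * U (l + \<tau>)) - (\<Sum>\<tau>=1..k-1. T (k + l - \<tau>) * U \<tau>))
       - ((\<Sum>\<sigma>=1..l. T (k + \<sigma>) * U (l - \<sigma>)) - (\<Sum>\<sigma>=1..l-1. T \<sigma> * U (k + l - \<sigma>)))"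
proof -
  define w where "w i = T i * U (k + l - i)" for i
  have "(\<Sum>m<k. \<Sum>r<l. U (m + 2 + (l - 1 - r)) * T (r + (k - 1 - m))
                      - U (m + (l - 1 - r)) * T (r + 2 + (k - 1 - m)))
      = (\<Sum>m<k. \<Sum>r<l. w (k - Suc m + r) - w (k - Suc m + r + 2))"
  proof (intro sum.cong refl)
    fix m r assume "m \<in> {..<k}" "r \<in> {..<l}"
    then have idx: "k + l - (k - Suc m + r) = m + 2 + (l - 1 - r)"
      "k + l - (k - Suc m + r + 2) = m + (l - 1 - r)"
      "r + (k - 1 - m) = k - Suc m + r" "r + 2 + (k - 1 - m) = k - Suc m + r + 2" by auto
    show "U (m + 2 + (l - 1 - r)) * T (r + (k - 1 - m)) - U (m + (l - 1 - r)) * T (r + 2 + (k - 1 - m))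
        = w (k - Suc m + r) - w (k - Suc m + r + 2)"
      unfolding w_def idx by (simp only: mult.commute)
  qed
  also have "\<dots> = (\<Sum>a<k. \<Sum>r<l. w (a + r) - w (a + r + 2))"
    by (rule sum.nat_diff_reindex[where g = "\<lambda>a. \<Sum>r<l. w (a + r) - w (a + r + 2)"])
  also have "\<dots> = (\<Sum>i<k. w i) - (\<Sum>i<k-1. w (l + 1 + i)) - (\<Sum>i<l. w (k + 1 + i)) + (\<Sum>i<l-1. w (1 + i))"
    using assms by (rule double_sum_telescope_step2)
  also have "(\<Sum>i<k. w i) = (\<Sum>\<tau>=1..k. T (k - \<tau>) * U (l + \<tau>))"
    by (subst sum.nat_diff_reindex[symmetric]) (auto simp: sum.atLeast1_atMost_eq w_def intro!: sum.cong)
  also have "(\<Sum>i<k-1. w (l + 1 + i)) = (\<Sum>\<tau>=1..k-1. T (k + l - \<tau>) * U \<tau>)"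
  proof -
    have "(\<Sum>i<k-1. w (l + 1 + i)) = (\<Sum>i<k-1. w (l + 1 + (k - 1 - Suc i)))"
      by (rule sum.nat_diff_reindex[symmetric])
    also have "\<dots> = (\<Sum>i<k-1. T (k + l - Suc i) * U (Suc i))"
    proof (rule sum.cong[OF refl])
      fix i assume "i \<in> {..<k-1}"
      then have idx: "l + 1 + (k - 1 - Suc i) = k + l - Suc i" "k + l - (k + l - Suc i) = Suc i" by auto
      show "w (l + 1 + (k - 1 - Suc i)) = T (k + l - Suc i) * U (Suc i)" by (simp only: w_def idx)
    qed
    finally show ?thesis by (simp add: sum.atLeast1_atMost_eq)
  qed
  also have "(\<Sum>i<l. w (k + 1 + i)) = (\<Sum>\<sigma>=1..l. T (k + \<sigma>) * U (l - \<sigma>))"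
    by (auto simp: sum.atLeast1_atMost_eq w_def intro!: sum.cong)
  also have "(\<Sum>i<l-1. w (1 + i)) = (\<Sum>\<sigma>=1..l-1. T \<sigma> * U (k + l - \<sigma>))"
    by (auto simp: sum.atLeast1_atMost_eq w_def intro!: sum.cong)
  finally show ?thesis by (simp add: algebra_simps)
qed

section \<open>Powers of \<open>Z\<close>\<close>

definition Zent :: "nat \<Rightarrow> point \<Rightarrow> nat \<Rightarrow> nat \<Rightarrow> complex" where
  "Zent n p i j = (if i < n \<and> j < n then p (Zc i j) else 0)"

fun Zpow :: "nat \<Rightarrow> point \<Rightarrow> nat \<Rightarrow> nat \<Rightarrow> nat \<Rightarrow> complex" where
  "Zpow n p 0 i j = (if i < n \<and> i = j then 1 else 0)"
| "Zpow n p (Suc k) i j = (\<Sum>m<n. Zpow n p k i m * Zent n p m j)"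

definition VZpow :: "nat \<Rightarrow> point \<Rightarrow> nat \<Rightarrow> nat \<Rightarrow> nat \<Rightarrow> complex" where
  "VZpow n p b r j = (\<Sum>i<n. vf p b i * Zpow n p r i j)"

definition ZpowW :: "nat \<Rightarrow> point \<Rightarrow> nat \<Rightarrow> nat \<Rightarrow> nat \<Rightarrow> complex" where
  "ZpowW n p a s j = (\<Sum>l<n. Zpow n p s j l * wf p a l)"

lemma Zpow_outside: "\<not> (i < n \<and> j < n) \<Longrightarrow> Zpow n p k i j = 0"
  by (induction k arbitrary: j) (auto simp: Zent_def)

lemma Zpow_add: "Zpow n p (r + s) i j = (\<Sum>m<n. Zpow n p r i m * Zpow n p s m j)"
proof (induction s arbitrary: j)
  case 0
  then show ?case by (cases "j < n") (simp_all add: delta_simps Zpow_outside)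
next
  case (Suc s)
  have "Zpow n p (r + Suc s) i j = (\<Sum>m<n. \<Sum>x<n. Zpow n p r i x * Zpow n p s x m * Zent n p m j)"
    by (simp add: Suc sum_distrib_right)
  also have "\<dots> = (\<Sum>x<n. \<Sum>m<n. Zpow n p r i x * Zpow n p s x m * Zent n p m j)"
    by (rule sum.swap)
  also have "\<dots> = (\<Sum>x<n. Zpow n p r i x * Zpow n p (Suc s) x j)"
    by (simp add: sum_distrib_left mult.assoc)
  finally show ?case .
qed

lemma Zpow_1: "Zpow n p 1 i j = Zent n p i j"
  by (auto simp: delta_simps Zent_def cong: if_cong)

lemma Zm_pow_nth: "i < n \<Longrightarrow> j < n \<Longrightarrow> (Zm n p ^\<^sub>m k) $$ (i,j) = Zpow n p k i j"
proof (induction k arbitrary: j)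
  case 0
  then show ?case by (simp add: Zm_def)
next
  case (Suc k)
  have Z: "Zm n p \<in> carrier_mat n n" by (simp add: Zm_def)
  have "(Zm n p ^\<^sub>m Suc k) $$ (i,j) = (\<Sum>m<n. (Zm n p ^\<^sub>m k) $$ (i,m) * Zm n p $$ (m,j))"
    using Suc.prems Z by (simp add: scalar_prod_def lessThan_atLeast0)
  also have "\<dots> = Zpow n p (Suc k) i j"
    using Suc by (auto simp: Zm_def Zent_def intro!: sum.cong)
  finally show ?case .
qed

lemma tf_Zpow: "tf n k a b p = (\<Sum>i<n. \<Sum>l<n. vf p b i * Zpow n p k i l * wf p a l)"
  unfolding tf_def vf_def wf_def by (auto simp: Zm_pow_nth intro!: sum.cong)

lemma trZ_Zpow: "trZ n i p = (\<Sum>j<n. Zpow n p i j j)"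
proof -
  have "dim_row (Zm n p ^\<^sub>m i) = n" by (simp add: Zm_def)
  then show ?thesis unfolding trZ_def mtrace_def by (auto simp: Zm_pow_nth intro!: sum.cong)
qed

lemma VZpow_outside: "\<not> j < n \<Longrightarrow> VZpow n p b r j = 0"
  by (simp add: VZpow_def Zpow_outside)

lemma ZpowW_outside: "\<not> j < n \<Longrightarrow> ZpowW n p a s j = 0"
  by (simp add: ZpowW_def Zpow_outside)

lemma ZpowW_0: "j < n \<Longrightarrow> ZpowW n p a 0 j = wf p a j"
  by (simp add: ZpowW_def delta_simps)

lemma VZpow_add: "VZpow n p b (r + s) j = (\<Sum>m<n. VZpow n p b r m * Zpow n p s m j)"
proof -
  have "VZpow n p b (r + s) j = (\<Sum>i<n. \<Sum>m<n. vf p b i * Zpow n p r i m * Zpow n p s m j)"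
    by (simp add: VZpow_def Zpow_add sum_distrib_left mult.assoc)
  also have "\<dots> = (\<Sum>m<n. VZpow n p b r m * Zpow n p s m j)"
    by (subst sum.swap) (simp add: VZpow_def sum_distrib_right)
  finally show ?thesis .
qed

lemma ZpowW_add: "ZpowW n p a (r + s) j = (\<Sum>m<n. Zpow n p r j m * ZpowW n p a s m)"
proof -
  have "ZpowW n p a (r + s) j = (\<Sum>l<n. \<Sum>m<n. Zpow n p r j m * (Zpow n p s m l * wf p a l))"
    by (simp add: ZpowW_def Zpow_add sum_distrib_right mult.assoc)
  also have "\<dots> = (\<Sum>m<n. Zpow n p r j m * ZpowW n p a s m)"
    by (subst sum.swap) (simp add: ZpowW_def sum_distrib_left)
  finally show ?thesis .
qed

lemma tf_eq_sum_vf_ZpowW: "tf n k a b p = (\<Sum>i<n. vf p b i * ZpowW n p a k i)"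
  by (simp add: tf_Zpow ZpowW_def sum_distrib_left mult.assoc)

lemma tf_eq_sum_VZpow_wf: "tf n k a b p = (\<Sum>l<n. VZpow n p b k l * wf p a l)"
  unfolding tf_Zpow VZpow_def sum_distrib_right by (rule sum.swap)

lemma sum_VZpow_ZpowW: "(\<Sum>j<n. VZpow n p b r j * ZpowW n p a s j) = tf n (r + s) a b p"
proof -
  have "(\<Sum>j<n. VZpow n p b r j * ZpowW n p a s j) = (\<Sum>l<n. \<Sum>j<n. VZpow n p b r j * Zpow n p s j l * wf p a l)"
    by (subst sum.swap) (simp add: ZpowW_def sum_distrib_left mult.assoc)
  also have "\<dots> = tf n (r + s) a b p"
    by (simp add: tf_eq_sum_VZpow_wf VZpow_add sum_distrib_right)
  finally show ?thesis .
qed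

lemma sum_VZpow_Zpow_ZpowW:
  "(\<Sum>u<n. \<Sum>w<n. VZpow n p b r u * Zpow n p m u w * ZpowW n p a s w) = tf n (r + m + s) a b p"
proof -
  have "(\<Sum>u<n. \<Sum>w<n. VZpow n p b r u * Zpow n p m u w * ZpowW n p a s w)
      = (\<Sum>w<n. VZpow n p b (r + m) w * ZpowW n p a s w)"
    by (subst sum.swap) (simp add: VZpow_add sum_distrib_right)
  then show ?thesis by (simp add: sum_VZpow_ZpowW)
qed

lemma zf_eq_Zpow_1: "i < n \<Longrightarrow> j < n \<Longrightarrow> zf p i j = Zpow n p 1 i j"
  unfolding Zpow_1 by (simp add: Zent_def zf_def)

lemma mm_zf_eq_Zpow_2: "i < n \<Longrightarrow> j < n \<Longrightarrow> mm n (zf p) (zf p) i j = Zpow n p 2 i j"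
  using Zpow_add[of n p 1 1 i j] by (simp add: mm_def zf_eq_Zpow_1 numeral_2_eq_2)

lemma VUv_zf: "j < n \<Longrightarrow> VUv n (zf p) p b j = VZpow n p b 1 j"
  by (auto simp: VUv_def VZpow_def zf_eq_Zpow_1 intro!: sum.cong)

lemma UWv_zf: "j < n \<Longrightarrow> UWv n (zf p) p a j = ZpowW n p a 1 j"
  by (auto simp: UWv_def ZpowW_def zf_eq_Zpow_1 intro!: sum.cong)

lemma VW_eq_tf: "VW n p a b = tf n 0 b a p"
  by (simp add: VW_def tf_eq_sum_vf_ZpowW ZpowW_0)

lemma sum_VZpow_M_ZpowW:
  assumes "\<And>i j. i < n \<Longrightarrow> j < n \<Longrightarrow> M i j = Zpow n p m i j"
  shows "(\<Sum>u<n. \<Sum>w<n. VZpow n p b r u * M u w * ZpowW n p a s w) = tf n (r + m + s) a b p"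
    and "(\<Sum>w<n. \<Sum>u<n. VZpow n p b r u * M u w * ZpowW n p a s w) = tf n (r + m + s) a b p"
proof -
  show "(\<Sum>u<n. \<Sum>w<n. VZpow n p b r u * M u w * ZpowW n p a s w) = tf n (r + m + s) a b p"
    by (simp add: assms sum_VZpow_Zpow_ZpowW[symmetric])
  then show "(\<Sum>w<n. \<Sum>u<n. VZpow n p b r u * M u w * ZpowW n p a s w) = tf n (r + m + s) a b p"
    by (subst sum.swap)
qed

lemma sum_VZpow_zf_ZpowW:
  "(\<Sum>u<n. \<Sum>w<n. VZpow n p b r u * zf p u w * ZpowW n p a s w) = tf n (r + 1 + s) a b p"
  "(\<Sum>w<n. \<Sum>u<n. VZpow n p b r u * zf p u w * ZpowW n p a s w) = tf n (r + 1 + s) a b p"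
  by (rule sum_VZpow_M_ZpowW, erule (1) zf_eq_Zpow_1)+

lemma sum_VZpow_mm_ZpowW:
  "(\<Sum>u<n. \<Sum>w<n. VZpow n p b r u * mm n (zf p) (zf p) u w * ZpowW n p a s w) = tf n (r + 2 + s) a b p"
  "(\<Sum>w<n. \<Sum>u<n. VZpow n p b r u * mm n (zf p) (zf p) u w * ZpowW n p a s w) = tf n (r + 2 + s) a b p"
  by (rule sum_VZpow_M_ZpowW, erule (1) mm_zf_eq_Zpow_2)+

lemma sum_VUv_zf_ZpowW: "(\<Sum>v<n. VUv n (zf p) p b v * ZpowW n p a s v) = tf n (1 + s) a b p"
  by (simp add: VUv_zf sum_VZpow_ZpowW)

lemma sum_VZpow_UWv_zf: "(\<Sum>u<n. VZpow n p b r u * UWv n (zf p) p a u) = tf n (r + 1) a b p"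
  by (simp add: UWv_zf sum_VZpow_ZpowW)

lemmas tf_contractions = sum_VZpow_ZpowW tf_eq_sum_vf_ZpowW[symmetric] tf_eq_sum_VZpow_wf[symmetric]
  sum_VZpow_zf_ZpowW sum_VZpow_mm_ZpowW sum_VUv_zf_ZpowW sum_VZpow_UWv_zf VW_eq_tf

section \<open>Gradients\<close>

lemma coord_update_deriv:
  "((\<lambda>t. (p(c := p c + t)) c') has_field_derivative (if c' = c then 1 else 0)) (at 0)"
proof (cases "c' = c")
  case True
  have "((\<lambda>t. p c + t) has_field_derivative 0 + 1) (at 0)"
    by (intro derivative_intros)
  then show ?thesis using True by simp
qed simp

lemma Zent_update_deriv:
  "((\<lambda>t. Zent n (p(c := p c + t)) i j) has_field_derivative
     (if i < n \<and> j < n \<and> c = Zc i j then 1 else 0)) (at 0)"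
proof (cases "i < n \<and> j < n")
  case True
  then show ?thesis using coord_update_deriv[of p c "Zc i j"] by (auto simp: Zent_def)
next
  case False
  then have "(\<lambda>t. Zent n (p(c := p c + t)) i j) = (\<lambda>t. 0)" by (auto simp: Zent_def)
  then show ?thesis using False by auto
qed

fun dZpow :: "nat \<Rightarrow> point \<Rightarrow> coord \<Rightarrow> nat \<Rightarrow> nat \<Rightarrow> nat \<Rightarrow> complex" where
  "dZpow n p c 0 i j = 0"
| "dZpow n p c (Suc k) i j = (\<Sum>m<n. dZpow n p c k i m * Zent n p m j
      + Zpow n p k i m * (if m < n \<and> j < n \<and> c = Zc m j then 1 else 0))"

lemma Zpow_update_deriv:
  "((\<lambda>t. Zpow n (p(c := p c + t)) k i j) has_field_derivative dZpow n p c k i j) (at 0)"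
proof (induction k arbitrary: j)
  case (Suc k)
  show ?case unfolding Zpow.simps dZpow.simps
  proof (rule DERIV_sum)
    fix m
    have "((\<lambda>t. Zpow n (p(c := p c + t)) k i m * Zent n (p(c := p c + t)) m j) has_field_derivative
       dZpow n p c k i m * Zent n (p(c := p c + 0)) m j
       + (if m < n \<and> j < n \<and> c = Zc m j then 1 else 0) * Zpow n (p(c := p c + 0)) k i m) (at 0)"
      by (rule DERIV_mult[OF Suc Zent_update_deriv])
    then show "((\<lambda>t. Zpow n (p(c := p c + t)) k i m * Zent n (p(c := p c + t)) m j) has_field_derivative
       dZpow n p c k i m * Zent n p m j + Zpow n p k i m * (if m < n \<and> j < n \<and> c = Zc m j then 1 else 0)) (at 0)"
      by (simp add: mult.commute)
  qed
qed simp

lemma dZpow_eq_0: "(\<And>i j. c \<noteq> Zc i j) \<Longrightarrow> dZpow n p c k i j = 0"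
  by (induction k arbitrary: j) auto

lemma dZpow_Zc: "dZpow n p (Zc u v) k i j = (\<Sum>m<k. Zpow n p m i u * Zpow n p (k - 1 - m) v j)"
proof (induction k arbitrary: j)
  case (Suc k)
  have from_Zent: "(\<Sum>m<n. Zpow n p k i m * (if m < n \<and> j < n \<and> Zc u v = Zc m j then 1 else 0))
      = Zpow n p k i u * Zpow n p 0 v j"
  proof (cases "u < n \<and> v < n \<and> j = v")
    case True
    have "(\<Sum>m<n. Zpow n p k i m * (if m < n \<and> j < n \<and> Zc u v = Zc m j then 1 else 0))
        = (\<Sum>m<n. if m = u then Zpow n p k i m else 0)"
      by (rule sum.cong) (use True in auto)
    then show ?thesis using True by simp
  next
    case False
    then show ?thesis using Zpow_outside[of i n u p k] by (auto intro!: sum.neutral)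
  qed
  have from_IH: "(\<Sum>m<n. dZpow n p (Zc u v) k i m * Zent n p m j)
      = (\<Sum>m<k. Zpow n p m i u * Zpow n p (Suc k - 1 - m) v j)"
  proof -
    have "(\<Sum>m<n. dZpow n p (Zc u v) k i m * Zent n p m j)
        = (\<Sum>m<n. \<Sum>x<k. Zpow n p x i u * (Zpow n p (k - 1 - x) v m * Zent n p m j))"
      by (simp add: Suc sum_distrib_right mult.assoc)
    also have "\<dots> = (\<Sum>x<k. Zpow n p x i u * Zpow n p (Suc (k - 1 - x)) v j)"
      by (subst sum.swap) (simp add: sum_distrib_left)
    also have "\<dots> = (\<Sum>m<k. Zpow n p m i u * Zpow n p (Suc k - 1 - m) v j)"
      by (rule sum.cong) (auto simp: Suc_diff_Suc)
    finally show ?thesis .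
  qed
  show ?case unfolding dZpow.simps sum.distrib from_Zent from_IH by simp
qed simp

lemma pd_tf: "pd (tf n k a b) p c = (\<Sum>i<n. \<Sum>l<n.
      (if c = Vc b i then 1 else 0) * Zpow n p k i l * wf p a l
    + vf p b i * dZpow n p c k i l * wf p a l
    + vf p b i * Zpow n p k i l * (if c = Wc a l then 1 else 0))"
proof -
  have tf_fun: "tf n k a b = (\<lambda>p. \<Sum>i<n. \<Sum>l<n. p (Vc b i) * Zpow n p k i l * p (Wc a l))"
    by (rule ext) (simp add: tf_Zpow vf_def wf_def)
  have "((\<lambda>t. tf n k a b (p(c := p c + t))) has_field_derivative (\<Sum>i<n. \<Sum>l<n.
      (if c = Vc b i then 1 else 0) * Zpow n p k i l * wf p a l
    + vf p b i * dZpow n p c k i l * wf p a l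
    + vf p b i * Zpow n p k i l * (if c = Wc a l then 1 else 0))) (at 0)"
    unfolding tf_fun
  proof (intro DERIV_sum)
    fix i l
    show "((\<lambda>t. (p(c := p c + t)) (Vc b i) * Zpow n (p(c := p c + t)) k i l * (p(c := p c + t)) (Wc a l))
       has_field_derivative
        (if c = Vc b i then 1 else 0) * Zpow n p k i l * wf p a l
      + vf p b i * dZpow n p c k i l * wf p a l
      + vf p b i * Zpow n p k i l * (if c = Wc a l then 1 else 0)) (at 0)"
    proof -
      have "((\<lambda>t. (p(c := p c + t)) (Vc b i) * Zpow n (p(c := p c + t)) k i l * (p(c := p c + t)) (Wc a l))
         has_field_derivative
         ((if Vc b i = c then 1 else 0) * Zpow n (p(c := p c + 0)) k i l
           + dZpow n p c k i l * (p(c := p c + 0)) (Vc b i)) * (p(c := p c + 0)) (Wc a l)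
         + (if Wc a l = c then 1 else 0) * ((p(c := p c + 0)) (Vc b i) * Zpow n (p(c := p c + 0)) k i l)) (at 0)"
        by (intro DERIV_mult coord_update_deriv Zpow_update_deriv)
      then show ?thesis by (rule DERIV_cong) (auto simp: vf_def wf_def algebra_simps)
    qed
  qed
  then show ?thesis unfolding pd_def by (rule DERIV_imp_deriv)
qed

lemma pd_tf_Xc: "pd (tf n k a b) p (Xc i j) = 0"
  by (simp add: pd_tf dZpow_eq_0)

lemma pd_tf_Vc: "pd (tf n k a b) p (Vc x j) = kd x b * ZpowW n p a k j"
proof -
  have "pd (tf n k a b) p (Vc x j)
      = (\<Sum>i<n. \<Sum>l<n. (if x = b \<and> j = i then 1 else 0) * Zpow n p k i l * wf p a l)"
    by (simp add: pd_tf dZpow_eq_0)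
  also have "\<dots> = (\<Sum>i<n. if i = j then kd x b * ZpowW n p a k i else 0)"
    by (rule sum.cong) (auto simp: ZpowW_def kd_def)
  finally show ?thesis by (simp add: ZpowW_outside)
qed

lemma pd_tf_Wc: "pd (tf n k a b) p (Wc x j) = kd x a * VZpow n p b k j"
proof -
  have "pd (tf n k a b) p (Wc x j)
      = (\<Sum>l<n. \<Sum>i<n. vf p b i * Zpow n p k i l * (if x = a \<and> j = l then 1 else 0))"
    by (simp add: pd_tf dZpow_eq_0) (rule sum.swap)
  also have "\<dots> = (\<Sum>l<n. if l = j then kd x a * VZpow n p b k l else 0)"
    by (rule sum.cong) (auto simp: VZpow_def kd_def)
  finally show ?thesis by (simp add: VZpow_outside)
qed

lemma pd_tf_Zc: "pd (tf n k a b) p (Zc u v) = (\<Sum>m<k. VZpow n p b m u * ZpowW n p a (k - 1 - m) v)"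
proof -
  have "pd (tf n k a b) p (Zc u v)
      = (\<Sum>i<n. \<Sum>l<n. \<Sum>m<k. (vf p b i * Zpow n p m i u) * (Zpow n p (k - 1 - m) v l * wf p a l))"
    by (simp add: pd_tf dZpow_Zc sum_distrib_left sum_distrib_right mult.assoc)
  also have "\<dots> = (\<Sum>m<k. \<Sum>i<n. \<Sum>l<n. (vf p b i * Zpow n p m i u) * (Zpow n p (k - 1 - m) v l * wf p a l))"
    by (rule sum_move_innermost_out_2)
  also have "\<dots> = (\<Sum>m<k. VZpow n p b m u * ZpowW n p a (k - 1 - m) v)"
    by (simp add: VZpow_def ZpowW_def sum_product)
  finally show ?thesis .
qed

lemma pd_trZ: "pd (trZ n i) p c = (\<Sum>j<n. dZpow n p c i j j)"
proof -
  have "((\<lambda>t. trZ n i (p(c := p c + t))) has_field_derivative (\<Sum>j<n. dZpow n p c i j j)) (at 0)"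
    unfolding trZ_Zpow by (intro DERIV_sum Zpow_update_deriv)
  then show ?thesis unfolding pd_def by (rule DERIV_imp_deriv)
qed

lemma pd_trZ_eq_0: "(\<And>i j. c \<noteq> Zc i j) \<Longrightarrow> pd (trZ n k) p c = 0"
  by (simp add: pd_trZ dZpow_eq_0)

lemma pd_trZ_Zc: "pd (trZ n i) p (Zc u v) = of_nat i * Zpow n p (i - 1) v u"
proof -
  have "pd (trZ n i) p (Zc u v) = (\<Sum>m<i. \<Sum>j<n. Zpow n p (i - 1 - m) v j * Zpow n p m j u)"
    by (simp add: pd_trZ dZpow_Zc mult.commute) (rule sum.swap)
  also have "\<dots> = (\<Sum>m<i. Zpow n p (i - 1) v u)"
    by (rule sum.cong) (auto simp: Zpow_add[symmetric])
  finally show ?thesis by simp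
qed

section \<open>The bracket as a sum of coordinate blocks\<close>

definition Xcoords :: "nat \<Rightarrow> coord set" where
  "Xcoords n = (\<lambda>(i, j). Xc i j) ` ({..<n} \<times> {..<n})"

definition Zcoords :: "nat \<Rightarrow> coord set" where
  "Zcoords n = (\<lambda>(i, j). Zc i j) ` ({..<n} \<times> {..<n})"

definition Vcoords :: "nat \<Rightarrow> nat \<Rightarrow> coord set" where
  "Vcoords n d = (\<lambda>(a, j). Vc a j) ` ({1..d} \<times> {..<n})"

definition Wcoords :: "nat \<Rightarrow> nat \<Rightarrow> coord set" where
  "Wcoords n d = (\<lambda>(a, j). Wc a j) ` ({1..d} \<times> {..<n})"

lemma sum_Zcoords: "(\<Sum>c\<in>Zcoords n. h c) = (\<Sum>i<n. \<Sum>j<n. h (Zc i j))"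
  unfolding Zcoords_def
  by (subst sum.reindex) (auto simp: inj_on_def sum.cartesian_product intro!: sum.cong split: prod.splits)

lemma sum_Vcoords: "(\<Sum>c\<in>Vcoords n d. h c) = (\<Sum>a\<in>{1..d}. \<Sum>j<n. h (Vc a j))"
  unfolding Vcoords_def
  by (subst sum.reindex) (auto simp: inj_on_def sum.cartesian_product intro!: sum.cong split: prod.splits)

lemma sum_Wcoords: "(\<Sum>c\<in>Wcoords n d. h c) = (\<Sum>a\<in>{1..d}. \<Sum>j<n. h (Wc a j))"
  unfolding Wcoords_def
  by (subst sum.reindex) (auto simp: inj_on_def sum.cartesian_product intro!: sum.cong split: prod.splits)

lemma sum_coords:
  "(\<Sum>c\<in>coords n d. h c) = (\<Sum>c\<in>Xcoords n. h c) + (\<Sum>c\<in>Zcoords n. h c)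
     + (\<Sum>c\<in>Vcoords n d. h c) + (\<Sum>c\<in>Wcoords n d. h c)"
proof -
  have coords: "coords n d = Xcoords n \<union> Zcoords n \<union> Vcoords n d \<union> Wcoords n d"
    by (simp add: coords_def Xcoords_def Zcoords_def Vcoords_def Wcoords_def)
  show ?thesis unfolding coords
    by (subst sum.union_disjoint, auto simp: Xcoords_def Zcoords_def Vcoords_def Wcoords_def)+
qed

definition qpb_block ::
  "nat \<Rightarrow> point \<Rightarrow> (coord \<Rightarrow> complex) \<Rightarrow> (coord \<Rightarrow> complex) \<Rightarrow> coord set \<Rightarrow> coord set \<Rightarrow> complex" where
  "qpb_block n p F G A B = (\<Sum>c\<in>A. \<Sum>c'\<in>B. F c * G c' * qpb n p c c')"

lemma pbr_eq_blocks:
  fixes n d :: nat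
  assumes "\<And>i j. pd f p (Xc i j) = 0" and "\<And>i j. pd g p (Xc i j) = 0"
  defines "blk \<equiv> qpb_block n p (pd f p) (pd g p)"
  shows "pbr n d f g p =
      blk (Zcoords n) (Zcoords n) + blk (Zcoords n) (Vcoords n d) + blk (Zcoords n) (Wcoords n d)
    + blk (Vcoords n d) (Zcoords n) + blk (Vcoords n d) (Vcoords n d) + blk (Vcoords n d) (Wcoords n d)
    + blk (Wcoords n d) (Zcoords n) + blk (Wcoords n d) (Vcoords n d) + blk (Wcoords n d) (Wcoords n d)"
proof -
  have X: "(\<Sum>c\<in>Xcoords n. h c) = 0" if "\<And>i j. h (Xc i j) = 0" for h :: "coord \<Rightarrow> complex"
    by (auto simp: Xcoords_def that intro!: sum.neutral)
  show ?thesis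
    unfolding pbr_def blk_def qpb_block_def sum_coords by (simp add: X assms sum.distrib)
qed

section \<open>Contracting brackets of coordinates\<close>

lemma sum_qpb_Zc_Zc:
  "(\<Sum>u<n. \<Sum>v<n. \<Sum>x<n. \<Sum>w<n. r u * c v * (r' x * c' w) * qpb n p (Zc u v) (Zc x w))
   = 1/2 * ((\<Sum>u<n. \<Sum>w<n. r u * mm n (zf p) (zf p) u w * c' w) * (\<Sum>v<n. r' v * c v)
          - (\<Sum>u<n. r u * c' u) * (\<Sum>v<n. \<Sum>x<n. r' x * mm n (zf p) (zf p) x v * c v))"
  \<comment> \<open>Products of sums are expanded before constants are distributed, so that both sides end up
    with the same nesting of sums once the Kronecker deltas are summed out.\<close>
  unfolding qpb.simps ring_distribs sum_subtractf
  unfolding sum_product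
  unfolding sum_distrib_left sum_distrib_right
  by (simp add: delta_simps mult_ac)

lemma sum_brUV:
  "(\<Sum>u<n. \<Sum>v<n. \<Sum>w<n. r u * c v * c' w * brUV n U p u v b w)
   = 1/2 * ((\<Sum>u<n. r u * c' u) * (\<Sum>v<n. VUv n U p b v * c v)
          - (\<Sum>u<n. \<Sum>w<n. r u * U u w * c' w) * (\<Sum>v<n. vf p b v * c v))"
  unfolding brUV_def ring_distribs sum_subtractf
  unfolding sum_product
  unfolding sum_distrib_left sum_distrib_right
  by (simp add: delta_simps mult_ac)

lemma sum_brUW:
  "(\<Sum>u<n. \<Sum>v<n. \<Sum>w<n. r u * c v * c' w * brUW n U p u v a w)
   = 1/2 * ((\<Sum>u<n. r u * UWv n U p a u) * (\<Sum>v<n. c' v * c v)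
          - (\<Sum>u<n. r u * wf p a u) * (\<Sum>v<n. \<Sum>w<n. c' w * U w v * c v))"
  unfolding brUW_def ring_distribs sum_subtractf
  unfolding sum_product
  unfolding sum_distrib_left sum_distrib_right
  by (simp add: delta_simps mult_ac)

lemma sum_brVW:
  "(\<Sum>j<n. \<Sum>k<n. c j * c' k * brVW n p a j b k)
   = kd a b * ((\<Sum>j<n. c' j * c j) + 1/2 * ((\<Sum>j<n. vf p a j * c j) * (\<Sum>k<n. c' k * wf p a k))
               + 1/2 * VW n p a a * (\<Sum>j<n. c' j * c j))
     + 1/2 * ord_sign a b * (VW n p a b * (\<Sum>j<n. c' j * c j)
               + (\<Sum>j<n. vf p a j * c j) * (\<Sum>k<n. c' k * wf p b k))"
  unfolding brVW_def ring_distribs sum.distrib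
  unfolding sum_product
  unfolding sum_distrib_left sum_distrib_right
  by (simp add: delta_simps mult_ac)

lemma sum_qpb_Vc_Vc:
  "(\<Sum>j<n. \<Sum>l<n. c j * c' l * qpb n p (Vc a j) (Vc b l))
   = 1/2 * ord_sign b a * ((\<Sum>j<n. vf p b j * c j) * (\<Sum>l<n. vf p a l * c' l)
                         + (\<Sum>j<n. vf p a j * c j) * (\<Sum>l<n. vf p b l * c' l))"
  unfolding qpb.simps ring_distribs sum.distrib
  unfolding sum_product
  unfolding sum_distrib_left sum_distrib_right
  by (simp add: mult_ac)

lemma sum_qpb_Wc_Wc:
  "(\<Sum>i<n. \<Sum>k<n. c i * c' k * qpb n p (Wc a i) (Wc b k))
   = 1/2 * ord_sign b a * ((\<Sum>i<n. c i * wf p a i) * (\<Sum>k<n. c' k * wf p b k)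
                         + (\<Sum>i<n. c i * wf p b i) * (\<Sum>k<n. c' k * wf p a k))"
  unfolding qpb.simps ring_distribs sum.distrib
  unfolding sum_product
  unfolding sum_distrib_left sum_distrib_right
  by (simp add: mult_ac)

lemma sum_Zpow_qpb_Zc:
  assumes "c < n" "e < n"
  shows "(\<Sum>u<n. \<Sum>v<n. Zpow n p m v u * qpb n p (Zc u v) (Zc c e)) = 0"
proof -
  have "(\<Sum>u<n. \<Sum>v<n. Zpow n p m v u * qpb n p (Zc u v) (Zc c e))
     = (\<Sum>u<n. \<Sum>v<n. 1/2 * (kd c v * (Zpow n p m v u * Zpow n p 2 u e)))
     - (\<Sum>u<n. \<Sum>v<n. 1/2 * (kd u e * (Zpow n p 2 c v * Zpow n p m v u)))"
    unfolding sum_subtractf[symmetric]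
    by (intro sum.cong refl) (use assms in \<open>auto simp: mm_zf_eq_Zpow_2 algebra_simps\<close>)
  also have "(\<Sum>u<n. \<Sum>v<n. 1/2 * (kd c v * (Zpow n p m v u * Zpow n p 2 u e)))
      = 1/2 * (\<Sum>u<n. Zpow n p m c u * Zpow n p 2 u e)"
    using assms by (simp add: delta_simps sum_distrib_left del: Zpow.simps)
  also have "\<dots> = 1/2 * Zpow n p (m + 2) c e"
    by (simp only: Zpow_add)
  also have "(\<Sum>u<n. \<Sum>v<n. 1/2 * (kd u e * (Zpow n p 2 c v * Zpow n p m v u)))
      = 1/2 * (\<Sum>v<n. Zpow n p 2 c v * Zpow n p m v e)"
    using assms by (subst sum.swap) (simp add: delta_simps sum_distrib_left del: Zpow.simps)
  also have "\<dots> = 1/2 * Zpow n p (2 + m) c e"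
    by (simp only: Zpow_add)
  finally show ?thesis by (simp add: add.commute)
qed

lemma sum_Zpow_qpb_Vc:
  assumes "j < n"
  shows "(\<Sum>u<n. \<Sum>v<n. Zpow n p m v u * qpb n p (Zc u v) (Vc a j)) = 0"
proof -
  have "(\<Sum>u<n. \<Sum>v<n. Zpow n p m v u * qpb n p (Zc u v) (Vc a j))
     = (\<Sum>u<n. \<Sum>v<n. 1/2 * (kd u j * (VZpow n p a 1 v * Zpow n p m v u)))
     - (\<Sum>u<n. \<Sum>v<n. 1/2 * (vf p a v * (Zpow n p m v u * Zpow n p 1 u j)))"
    unfolding sum_subtractf[symmetric]
    by (intro sum.cong refl) (use assms in \<open>auto simp: brUV_def VUv_zf zf_eq_Zpow_1 algebra_simps\<close>)
  also have "(\<Sum>u<n. \<Sum>v<n. 1/2 * (kd u j * (VZpow n p a 1 v * Zpow n p m v u)))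
      = 1/2 * (\<Sum>v<n. VZpow n p a 1 v * Zpow n p m v j)"
    using assms by (subst sum.swap) (simp add: delta_simps sum_distrib_left del: Zpow.simps)
  also have "\<dots> = 1/2 * VZpow n p a (1 + m) j"
    by (simp only: VZpow_add)
  also have "(\<Sum>u<n. \<Sum>v<n. 1/2 * (vf p a v * (Zpow n p m v u * Zpow n p 1 u j)))
      = 1/2 * (\<Sum>v<n. vf p a v * (\<Sum>u<n. Zpow n p m v u * Zpow n p 1 u j))"
    by (subst sum.swap) (simp add: sum_distrib_left del: Zpow.simps)
  also have "\<dots> = 1/2 * VZpow n p a (m + 1) j"
    by (simp only: VZpow_def Zpow_add)
  finally show ?thesis by (simp add: add.commute)
qed

lemma sum_Zpow_qpb_Wc:
  assumes "j < n"
  shows "(\<Sum>u<n. \<Sum>v<n. Zpow n p m v u * qpb n p (Zc u v) (Wc a j)) = 0"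
proof -
  have "(\<Sum>u<n. \<Sum>v<n. Zpow n p m v u * qpb n p (Zc u v) (Wc a j))
     = (\<Sum>u<n. \<Sum>v<n. 1/2 * (kd j v * (Zpow n p m v u * ZpowW n p a 1 u)))
     - (\<Sum>u<n. \<Sum>v<n. 1/2 * ((Zpow n p 1 j v * Zpow n p m v u) * wf p a u))"
    unfolding sum_subtractf[symmetric]
    by (intro sum.cong refl) (use assms in \<open>auto simp: brUW_def UWv_zf zf_eq_Zpow_1 algebra_simps\<close>)
  also have "(\<Sum>u<n. \<Sum>v<n. 1/2 * (kd j v * (Zpow n p m v u * ZpowW n p a 1 u)))
      = 1/2 * (\<Sum>u<n. Zpow n p m j u * ZpowW n p a 1 u)"
    using assms by (simp add: delta_simps sum_distrib_left del: Zpow.simps)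
  also have "\<dots> = 1/2 * ZpowW n p a (m + 1) j"
    by (simp only: ZpowW_add)
  also have "(\<Sum>u<n. \<Sum>v<n. 1/2 * ((Zpow n p 1 j v * Zpow n p m v u) * wf p a u))
      = 1/2 * (\<Sum>u<n. (\<Sum>v<n. Zpow n p 1 j v * Zpow n p m v u) * wf p a u)"
    by (simp add: sum_distrib_left sum_distrib_right del: Zpow.simps)
  also have "\<dots> = 1/2 * ZpowW n p a (1 + m) j"
    by (simp only: ZpowW_def Zpow_add)
  finally show ?thesis by (simp add: add.commute)
qed

lemma sum_Zpow_qpb_eq_0:
  "c \<in> Zcoords n \<union> Vcoords n d \<union> Wcoords n d
   \<Longrightarrow> (\<Sum>u<n. \<Sum>v<n. Zpow n p m v u * qpb n p (Zc u v) c) = 0"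
  by (auto simp: Zcoords_def Vcoords_def Wcoords_def sum_Zpow_qpb_Zc sum_Zpow_qpb_Vc sum_Zpow_qpb_Wc
      simp del: qpb.simps)

section \<open>Brackets with \<open>tr Z\<^sup>i\<close>\<close>

lemma pbr_trZ:
  assumes "\<And>i j. pd g p (Xc i j) = 0"
  shows "pbr n d (trZ n i) g p = 0"
proof -
  let ?F = "pd (trZ n i) p" and ?G = "pd g p"
  have Zrow: "qpb_block n p ?F ?G (Zcoords n) B = 0" if "B \<subseteq> Zcoords n \<union> Vcoords n d \<union> Wcoords n d" for B
  proof -
    have "qpb_block n p ?F ?G (Zcoords n) B = (\<Sum>c\<in>B. \<Sum>u<n. \<Sum>v<n. ?F (Zc u v) * ?G c * qpb n p (Zc u v) c)"
      unfolding qpb_block_def sum_Zcoords by (rule sum_move_innermost_out_2)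
    also have "\<dots> = (\<Sum>c\<in>B. of_nat i * ?G c * (\<Sum>u<n. \<Sum>v<n. Zpow n p (i - 1) v u * qpb n p (Zc u v) c))"
      by (simp add: pd_trZ_Zc sum_distrib_left mult_ac del: qpb.simps)
    also have "\<dots> = 0"
      by (intro sum.neutral ballI) (simp add: sum_Zpow_qpb_eq_0[OF subsetD[OF that]] del: qpb.simps)
    finally show ?thesis .
  qed
  have VWrow: "qpb_block n p ?F ?G A B = 0" if "A \<subseteq> Vcoords n d \<union> Wcoords n d" for A B
    using that unfolding qpb_block_def
    by (intro sum.neutral) (auto simp: Vcoords_def Wcoords_def pd_trZ_eq_0)
  have "Zcoords n \<subseteq> Zcoords n \<union> Vcoords n d \<union> Wcoords n d"
    "Vcoords n d \<subseteq> Zcoords n \<union> Vcoords n d \<union> Wcoords n d"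
    "Wcoords n d \<subseteq> Zcoords n \<union> Vcoords n d \<union> Wcoords n d" by auto
  then show ?thesis
    by (simp add: pbr_eq_blocks[OF pd_trZ_eq_0 assms] Zrow VWrow)
qed

section \<open>Brackets of the functions \<open>t\<close>\<close>

context
  fixes n d k l :: nat and p :: point and \<alpha> \<beta> \<gamma> \<epsilon> :: nat
  assumes labels: "\<alpha> \<in> {1..d}" "\<beta> \<in> {1..d}" "\<gamma> \<in> {1..d}" "\<epsilon> \<in> {1..d}"
begin

lemma qpb_block_VV:
  "qpb_block n p (pd (tf n k \<gamma> \<epsilon>) p) (pd (tf n l \<alpha> \<beta>) p) (Vcoords n d) (Vcoords n d)
   = 1/2 * ord_sign \<beta> \<epsilon> * (tf n k \<gamma> \<beta> p * tf n l \<alpha> \<epsilon> p + tf n k \<gamma> \<epsilon> p * tf n l \<alpha> \<beta> p)"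
proof -
  have "qpb_block n p (pd (tf n k \<gamma> \<epsilon>) p) (pd (tf n l \<alpha> \<beta>) p) (Vcoords n d) (Vcoords n d)
      = (\<Sum>j<n. \<Sum>j'<n. ZpowW n p \<gamma> k j * ZpowW n p \<alpha> l j' * qpb n p (Vc \<epsilon> j) (Vc \<beta> j'))"
    using labels by (simp add: qpb_block_def sum_Vcoords pd_tf_Vc delta_simps del: qpb.simps)
  then show ?thesis by (simp only: sum_qpb_Vc_Vc tf_contractions)
qed

lemma qpb_block_WW:
  "qpb_block n p (pd (tf n k \<gamma> \<epsilon>) p) (pd (tf n l \<alpha> \<beta>) p) (Wcoords n d) (Wcoords n d)
   = 1/2 * ord_sign \<alpha> \<gamma> * (tf n k \<gamma> \<epsilon> p * tf n l \<alpha> \<beta> p + tf n k \<alpha> \<epsilon> p * tf n l \<gamma> \<beta> p)"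
proof -
  have "qpb_block n p (pd (tf n k \<gamma> \<epsilon>) p) (pd (tf n l \<alpha> \<beta>) p) (Wcoords n d) (Wcoords n d)
      = (\<Sum>j<n. \<Sum>j'<n. VZpow n p \<epsilon> k j * VZpow n p \<beta> l j' * qpb n p (Wc \<gamma> j) (Wc \<alpha> j'))"
    using labels by (simp add: qpb_block_def sum_Wcoords pd_tf_Wc delta_simps del: qpb.simps)
  then show ?thesis by (simp only: sum_qpb_Wc_Wc tf_contractions)
qed

lemma qpb_block_VW:
  "qpb_block n p (pd (tf n k \<gamma> \<epsilon>) p) (pd (tf n l \<alpha> \<beta>) p) (Vcoords n d) (Wcoords n d)
   = kd \<epsilon> \<alpha> * (tf n (l + k) \<gamma> \<beta> p + 1/2 * (tf n k \<gamma> \<epsilon> p * tf n l \<epsilon> \<beta> p)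
                  + 1/2 * tf n 0 \<epsilon> \<epsilon> p * tf n (l + k) \<gamma> \<beta> p)
     + 1/2 * ord_sign \<epsilon> \<alpha> * (tf n 0 \<alpha> \<epsilon> p * tf n (l + k) \<gamma> \<beta> p + tf n k \<gamma> \<epsilon> p * tf n l \<alpha> \<beta> p)"
proof -
  have "qpb_block n p (pd (tf n k \<gamma> \<epsilon>) p) (pd (tf n l \<alpha> \<beta>) p) (Vcoords n d) (Wcoords n d)
      = (\<Sum>j<n. \<Sum>j'<n. ZpowW n p \<gamma> k j * VZpow n p \<beta> l j' * brVW n p \<epsilon> j \<alpha> j')"
    using labels by (simp add: qpb_block_def sum_Vcoords sum_Wcoords pd_tf_Vc pd_tf_Wc delta_simps)
  then show ?thesis by (simp only: sum_brVW tf_contractions)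
qed

lemma qpb_block_WV:
  "qpb_block n p (pd (tf n k \<gamma> \<epsilon>) p) (pd (tf n l \<alpha> \<beta>) p) (Wcoords n d) (Vcoords n d)
   = - (kd \<beta> \<gamma> * (tf n (k + l) \<alpha> \<epsilon> p + 1/2 * (tf n l \<alpha> \<beta> p * tf n k \<beta> \<epsilon> p)
                     + 1/2 * tf n 0 \<beta> \<beta> p * tf n (k + l) \<alpha> \<epsilon> p)
        + 1/2 * ord_sign \<beta> \<gamma> * (tf n 0 \<gamma> \<beta> p * tf n (k + l) \<alpha> \<epsilon> p + tf n l \<alpha> \<beta> p * tf n k \<gamma> \<epsilon> p))"
proof -
  have "qpb_block n p (pd (tf n k \<gamma> \<epsilon>) p) (pd (tf n l \<alpha> \<beta>) p) (Wcoords n d) (Vcoords n d)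
      = - (\<Sum>j<n. \<Sum>j'<n. ZpowW n p \<alpha> l j' * VZpow n p \<epsilon> k j * brVW n p \<beta> j' \<gamma> j)"
    using labels by (simp add: qpb_block_def sum_Vcoords sum_Wcoords pd_tf_Vc pd_tf_Wc delta_simps
        sum_negf mult_ac)
  also have "\<dots> = - (\<Sum>j'<n. \<Sum>j<n. ZpowW n p \<alpha> l j' * VZpow n p \<epsilon> k j * brVW n p \<beta> j' \<gamma> j)"
    by (subst sum.swap) (rule refl)
  finally show ?thesis by (simp only: sum_brVW tf_contractions)
qed

lemma qpb_block_ZV:
  "qpb_block n p (pd (tf n k \<gamma> \<epsilon>) p) (pd (tf n l \<alpha> \<beta>) p) (Zcoords n) (Vcoords n d)
   = 1/2 * (tf n k \<gamma> \<beta> p * tf n l \<alpha> \<epsilon> p - tf n 0 \<gamma> \<beta> p * tf n (k + l) \<alpha> \<epsilon> p)"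
proof -
  have "qpb_block n p (pd (tf n k \<gamma> \<epsilon>) p) (pd (tf n l \<alpha> \<beta>) p) (Zcoords n) (Vcoords n d)
      = (\<Sum>u<n. \<Sum>v<n. \<Sum>w<n. (\<Sum>m<k. VZpow n p \<epsilon> m u * ZpowW n p \<gamma> (k - 1 - m) v)
          * ZpowW n p \<alpha> l w * brUV n (zf p) p u v \<beta> w)"
    using labels by (simp add: qpb_block_def sum_Zcoords sum_Vcoords pd_tf_Zc pd_tf_Vc delta_simps)
  also have "\<dots> = (\<Sum>m<k. \<Sum>u<n. \<Sum>v<n. \<Sum>w<n. VZpow n p \<epsilon> m u * ZpowW n p \<gamma> (k - 1 - m) v
          * ZpowW n p \<alpha> l w * brUV n (zf p) p u v \<beta> w)"
    unfolding sum_distrib_right by (rule sum_move_innermost_out_3)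
  also have "\<dots> = 1/2 * (\<Sum>m<k. tf n (k - m) \<gamma> \<beta> p * tf n (m + l) \<alpha> \<epsilon> p
          - tf n (k - Suc m) \<gamma> \<beta> p * tf n (Suc m + l) \<alpha> \<epsilon> p)"
    unfolding sum_brUV tf_contractions by (simp add: sum_distrib_left Suc_diff_Suc algebra_simps)
  finally show ?thesis
    using sum_telescope_mult[where f="\<lambda>x. tf n x \<gamma> \<beta> p" and g="\<lambda>m. tf n (m + l) \<alpha> \<epsilon> p" and k=k] by simp
qed

lemma qpb_block_ZW:
  "qpb_block n p (pd (tf n k \<gamma> \<epsilon>) p) (pd (tf n l \<alpha> \<beta>) p) (Zcoords n) (Wcoords n d)
   = 1/2 * (tf n l \<gamma> \<beta> p * tf n k \<alpha> \<epsilon> p - tf n (l + k) \<gamma> \<beta> p * tf n 0 \<alpha> \<epsilon> p)"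
proof -
  have "qpb_block n p (pd (tf n k \<gamma> \<epsilon>) p) (pd (tf n l \<alpha> \<beta>) p) (Zcoords n) (Wcoords n d)
      = (\<Sum>u<n. \<Sum>v<n. \<Sum>w<n. (\<Sum>m<k. VZpow n p \<epsilon> m u * ZpowW n p \<gamma> (k - 1 - m) v)
          * VZpow n p \<beta> l w * brUW n (zf p) p u v \<alpha> w)"
    using labels by (simp add: qpb_block_def sum_Zcoords sum_Wcoords pd_tf_Zc pd_tf_Wc delta_simps)
  also have "\<dots> = (\<Sum>m<k. \<Sum>u<n. \<Sum>v<n. \<Sum>w<n. VZpow n p \<epsilon> m u * ZpowW n p \<gamma> (k - 1 - m) v
          * VZpow n p \<beta> l w * brUW n (zf p) p u v \<alpha> w)"
    unfolding sum_distrib_right by (rule sum_move_innermost_out_3)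
  also have "\<dots> = - 1/2 * (\<Sum>m<k. tf n (l + (k - m)) \<gamma> \<beta> p * tf n m \<alpha> \<epsilon> p
          - tf n (l + (k - Suc m)) \<gamma> \<beta> p * tf n (Suc m) \<alpha> \<epsilon> p)"
    unfolding sum_brUW tf_contractions by (simp add: sum_distrib_left Suc_diff_Suc algebra_simps)
  finally show ?thesis
    using sum_telescope_mult[where f="\<lambda>x. tf n (l + x) \<gamma> \<beta> p" and g="\<lambda>m. tf n m \<alpha> \<epsilon> p" and k=k]
    by (simp add: algebra_simps)
qed

lemma qpb_block_VZ:
  "qpb_block n p (pd (tf n k \<gamma> \<epsilon>) p) (pd (tf n l \<alpha> \<beta>) p) (Vcoords n d) (Zcoords n)
   = 1/2 * (tf n 0 \<alpha> \<epsilon> p * tf n (l + k) \<gamma> \<beta> p - tf n l \<alpha> \<epsilon> p * tf n k \<gamma> \<beta> p)"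
proof -
  have "qpb_block n p (pd (tf n k \<gamma> \<epsilon>) p) (pd (tf n l \<alpha> \<beta>) p) (Vcoords n d) (Zcoords n)
      = (\<Sum>j<n. \<Sum>u<n. \<Sum>v<n. ZpowW n p \<gamma> k j
          * (\<Sum>r<l. VZpow n p \<beta> r u * ZpowW n p \<alpha> (l - 1 - r) v) * - brUV n (zf p) p u v \<epsilon> j)"
    using labels by (simp add: qpb_block_def sum_Zcoords sum_Vcoords pd_tf_Zc pd_tf_Vc delta_simps)
  also have "\<dots> = (\<Sum>r<l. \<Sum>j<n. \<Sum>u<n. \<Sum>v<n. - (VZpow n p \<beta> r u * ZpowW n p \<alpha> (l - 1 - r) v
          * ZpowW n p \<gamma> k j * brUV n (zf p) p u v \<epsilon> j))"
    unfolding sum_distrib_left sum_distrib_right by (subst sum_move_innermost_out_3) (simp add: mult_ac)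
  also have "\<dots> = - (\<Sum>r<l. \<Sum>u<n. \<Sum>v<n. \<Sum>j<n. VZpow n p \<beta> r u * ZpowW n p \<alpha> (l - 1 - r) v
          * ZpowW n p \<gamma> k j * brUV n (zf p) p u v \<epsilon> j)"
    unfolding sum_negf
    by (rule arg_cong[where f=uminus], rule sum.cong[OF refl], rule sum_move_innermost_out_2[symmetric])
  also have "\<dots> = - 1/2 * (\<Sum>r<l. tf n (l - r) \<alpha> \<epsilon> p * tf n (r + k) \<gamma> \<beta> p
          - tf n (l - Suc r) \<alpha> \<epsilon> p * tf n (Suc r + k) \<gamma> \<beta> p)"
    unfolding sum_brUV tf_contractions
    by (simp add: sum_distrib_left sum_negf[symmetric] Suc_diff_Suc algebra_simps)
  finally show ?thesis
    using sum_telescope_mult[where f="\<lambda>x. tf n x \<alpha> \<epsilon> p" and g="\<lambda>r. tf n (r + k) \<gamma> \<beta> p" and k=l]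
    by (simp add: algebra_simps)
qed

lemma qpb_block_WZ:
  "qpb_block n p (pd (tf n k \<gamma> \<epsilon>) p) (pd (tf n l \<alpha> \<beta>) p) (Wcoords n d) (Zcoords n)
   = 1/2 * (tf n (k + l) \<alpha> \<epsilon> p * tf n 0 \<gamma> \<beta> p - tf n k \<alpha> \<epsilon> p * tf n l \<gamma> \<beta> p)"
proof -
  have "qpb_block n p (pd (tf n k \<gamma> \<epsilon>) p) (pd (tf n l \<alpha> \<beta>) p) (Wcoords n d) (Zcoords n)
      = (\<Sum>j<n. \<Sum>u<n. \<Sum>v<n. VZpow n p \<epsilon> k j
          * (\<Sum>r<l. VZpow n p \<beta> r u * ZpowW n p \<alpha> (l - 1 - r) v) * - brUW n (zf p) p u v \<gamma> j)"
    using labels by (simp add: qpb_block_def sum_Zcoords sum_Wcoords pd_tf_Zc pd_tf_Wc delta_simps)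
  also have "\<dots> = (\<Sum>r<l. \<Sum>j<n. \<Sum>u<n. \<Sum>v<n. - (VZpow n p \<beta> r u * ZpowW n p \<alpha> (l - 1 - r) v
          * VZpow n p \<epsilon> k j * brUW n (zf p) p u v \<gamma> j))"
    unfolding sum_distrib_left sum_distrib_right by (subst sum_move_innermost_out_3) (simp add: mult_ac)
  also have "\<dots> = - (\<Sum>r<l. \<Sum>u<n. \<Sum>v<n. \<Sum>j<n. VZpow n p \<beta> r u * ZpowW n p \<alpha> (l - 1 - r) v
          * VZpow n p \<epsilon> k j * brUW n (zf p) p u v \<gamma> j)"
    unfolding sum_negf
    by (rule arg_cong[where f=uminus], rule sum.cong[OF refl], rule sum_move_innermost_out_2[symmetric])
  also have "\<dots> = 1/2 * (\<Sum>r<l. tf n (k + (l - r)) \<alpha> \<epsilon> p * tf n r \<gamma> \<beta> p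
          - tf n (k + (l - Suc r)) \<alpha> \<epsilon> p * tf n (Suc r) \<gamma> \<beta> p)"
    unfolding sum_brUW tf_contractions
    by (simp add: sum_distrib_left sum_negf[symmetric] Suc_diff_Suc algebra_simps)
  finally show ?thesis
    using sum_telescope_mult[where f="\<lambda>x. tf n (k + x) \<alpha> \<epsilon> p" and g="\<lambda>r. tf n r \<gamma> \<beta> p" and k=l]
    by simp
qed

lemma qpb_block_ZZ:
  "qpb_block n p (pd (tf n k \<gamma> \<epsilon>) p) (pd (tf n l \<alpha> \<beta>) p) (Zcoords n) (Zcoords n)
   = 1/2 * (\<Sum>m<k. \<Sum>r<l. tf n (m + 2 + (l - 1 - r)) \<alpha> \<epsilon> p * tf n (r + (k - 1 - m)) \<gamma> \<beta> p
                          - tf n (m + (l - 1 - r)) \<alpha> \<epsilon> p * tf n (r + 2 + (k - 1 - m)) \<gamma> \<beta> p)"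
proof -
  have "qpb_block n p (pd (tf n k \<gamma> \<epsilon>) p) (pd (tf n l \<alpha> \<beta>) p) (Zcoords n) (Zcoords n)
      = (\<Sum>u<n. \<Sum>v<n. \<Sum>x<n. \<Sum>w<n.
          (\<Sum>m<k. VZpow n p \<epsilon> m u * ZpowW n p \<gamma> (k - 1 - m) v)
        * (\<Sum>r<l. VZpow n p \<beta> r x * ZpowW n p \<alpha> (l - 1 - r) w) * qpb n p (Zc u v) (Zc x w))"
    by (simp add: qpb_block_def sum_Zcoords pd_tf_Zc del: qpb.simps)
  also have "\<dots> = (\<Sum>m<k. \<Sum>r<l. \<Sum>u<n. \<Sum>v<n. \<Sum>x<n. \<Sum>w<n.
          VZpow n p \<epsilon> m u * ZpowW n p \<gamma> (k - 1 - m) v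
        * (VZpow n p \<beta> r x * ZpowW n p \<alpha> (l - 1 - r) w) * qpb n p (Zc u v) (Zc x w))"
    unfolding sum_product unfolding sum_distrib_right
    by (subst sum_move_innermost_out_4) (rule sum.cong[OF refl], rule sum_move_innermost_out_4)
  also have "\<dots> = 1/2 * (\<Sum>m<k. \<Sum>r<l. tf n (m + 2 + (l - 1 - r)) \<alpha> \<epsilon> p * tf n (r + (k - 1 - m)) \<gamma> \<beta> p
                          - tf n (m + (l - 1 - r)) \<alpha> \<epsilon> p * tf n (r + 2 + (k - 1 - m)) \<gamma> \<beta> p)"
    unfolding sum_qpb_Zc_Zc tf_contractions by (simp add: sum_distrib_left algebra_simps)
  finally show ?thesis .
qed

end

lemma ord_sign_swap: "ord_sign a b = - ord_sign b a"
  by (simp add: ord_sign_def)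

lemma pbr_tf_tf:
  assumes labels: "\<alpha> \<in> {1..d}" "\<beta> \<in> {1..d}" "\<gamma> \<in> {1..d}" "\<epsilon> \<in> {1..d}"
  shows "pbr n d (tf n k \<gamma> \<epsilon>) (tf n l \<alpha> \<beta>) p =
      1/2 * (ord_sign \<gamma> \<beta> + ord_sign \<epsilon> \<alpha> - ord_sign \<epsilon> \<beta> - ord_sign \<gamma> \<alpha>) * tf n k \<gamma> \<epsilon> p * tf n l \<alpha> \<beta> p
    + 1/2 * ord_sign \<gamma> \<beta> * tf n (k+l) \<alpha> \<epsilon> p * tf n 0 \<gamma> \<beta> p
    + 1/2 * ord_sign \<epsilon> \<alpha> * tf n 0 \<alpha> \<epsilon> p * tf n (k+l) \<gamma> \<beta> p
    - 1/2 * ord_sign \<epsilon> \<beta> * tf n l \<alpha> \<epsilon> p * tf n k \<gamma> \<beta> p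
    - 1/2 * ord_sign \<gamma> \<alpha> * tf n k \<alpha> \<epsilon> p * tf n l \<gamma> \<beta> p
    - kd \<gamma> \<beta> * (tf n (k+l) \<alpha> \<epsilon> p + 1/2 * tf n (k+l) \<alpha> \<epsilon> p * tf n 0 \<gamma> \<beta> p
                   + 1/2 * tf n k \<gamma> \<epsilon> p * tf n l \<alpha> \<beta> p)
    + kd \<alpha> \<epsilon> * (tf n (k+l) \<gamma> \<beta> p + 1/2 * tf n 0 \<alpha> \<epsilon> p * tf n (k+l) \<gamma> \<beta> p
                   + 1/2 * tf n k \<gamma> \<epsilon> p * tf n l \<alpha> \<beta> p)
    + (if k \<ge> 1 \<and> l \<ge> 1 then
         1/2 * ((\<Sum>\<tau>=1..k. tf n (k-\<tau>) \<gamma> \<beta> p * tf n (l+\<tau>) \<alpha> \<epsilon> p)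
              - (\<Sum>\<tau>=1..k-1. tf n (k+l-\<tau>) \<gamma> \<beta> p * tf n \<tau> \<alpha> \<epsilon> p))
       - 1/2 * ((\<Sum>\<sigma>=1..l. tf n (k+\<sigma>) \<gamma> \<beta> p * tf n (l-\<sigma>) \<alpha> \<epsilon> p)
              - (\<Sum>\<sigma>=1..l-1. tf n \<sigma> \<gamma> \<beta> p * tf n (k+l-\<sigma>) \<alpha> \<epsilon> p))
       else 0)"
    (is "_ = _ + ?ZZ")
proof -
  have ZZ: "qpb_block n p (pd (tf n k \<gamma> \<epsilon>) p) (pd (tf n l \<alpha> \<beta>) p) (Zcoords n) (Zcoords n) = ?ZZ"
  proof (cases "k \<ge> 1 \<and> l \<ge> 1")
    case True
    then show ?thesis
      using double_sum_telescope[where T="\<lambda>x. tf n x \<gamma> \<beta> p" and U="\<lambda>x. tf n x \<alpha> \<epsilon> p" and k=k and l=l]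
      by (simp add: qpb_block_ZZ[OF labels] right_diff_distrib)
  next
    case False
    then have "k = 0 \<or> l = 0" by auto
    then show ?thesis by (auto simp: qpb_block_ZZ[OF labels])
  qed
  show ?thesis
    unfolding pbr_eq_blocks[OF pd_tf_Xc pd_tf_Xc] ZZ
      qpb_block_ZV[OF labels] qpb_block_ZW[OF labels] qpb_block_VZ[OF labels] qpb_block_VV[OF labels]
      qpb_block_VW[OF labels] qpb_block_WZ[OF labels] qpb_block_WV[OF labels] qpb_block_WW[OF labels]
      ord_sign_swap[of \<beta> \<epsilon>] ord_sign_swap[of \<alpha> \<gamma>] ord_sign_swap[of \<beta> \<gamma>] add.commute[of l k]
    by (cases "\<epsilon> = \<alpha>"; cases "\<beta> = \<gamma>") (simp_all add: kd_def algebra_simps)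
qed

theorem mainTheorem8:
  fixes n d :: nat and q :: complex
  assumes "n \<ge> 1" and "d \<ge> 1" and "q \<noteq> 0" and "\<forall>m::nat. m > 0 \<longrightarrow> q ^ m \<noteq> 1"
  shows "(\<forall>p\<in>Mx n d q. \<forall>i k \<alpha> \<beta>. i \<ge> 1 \<longrightarrow> \<alpha> \<in> {1..d} \<longrightarrow> \<beta> \<in> {1..d} \<longrightarrow>
            pbr n d (trZ n i) (tf n k \<beta> \<alpha>) p = 0)
       \<and> (\<forall>p\<in>Mx n d q. \<forall>\<alpha>\<in>{1..d}. \<forall>\<beta>\<in>{1..d}. \<forall>\<gamma>\<in>{1..d}. \<forall>\<epsilon>\<in>{1..d}. \<forall>k l.
            (let t = (\<lambda>m a b. tf n m a b p); h = (1/2 :: complex); sg = ord_sign in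
             pbr n d (tf n k \<gamma> \<epsilon>) (tf n l \<alpha> \<beta>) p =
               h * (sg \<gamma> \<beta> + sg \<epsilon> \<alpha> - sg \<epsilon> \<beta> - sg \<gamma> \<alpha>) * t k \<gamma> \<epsilon> * t l \<alpha> \<beta>
             + h * sg \<gamma> \<beta> * t (k+l) \<alpha> \<epsilon> * t 0 \<gamma> \<beta>
             + h * sg \<epsilon> \<alpha> * t 0 \<alpha> \<epsilon> * t (k+l) \<gamma> \<beta>
             - h * sg \<epsilon> \<beta> * t l \<alpha> \<epsilon> * t k \<gamma> \<beta>
             - h * sg \<gamma> \<alpha> * t k \<alpha> \<epsilon> * t l \<gamma> \<beta>
             - kd \<gamma> \<beta> * (t (k+l) \<alpha> \<epsilon> + h * t (k+l) \<alpha> \<epsilon> * t 0 \<gamma> \<beta> + h * t k \<gamma> \<epsilon> * t l \<alpha> \<beta>)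
             + kd \<alpha> \<epsilon> * (t (k+l) \<gamma> \<beta> + h * t 0 \<alpha> \<epsilon> * t (k+l) \<gamma> \<beta> + h * t k \<gamma> \<epsilon> * t l \<alpha> \<beta>)
             + (if k \<ge> 1 \<and> l \<ge> 1 then
                  h * ((\<Sum>\<tau>=1..k. t (k-\<tau>) \<gamma> \<beta> * t (l+\<tau>) \<alpha> \<epsilon>)
                       - (\<Sum>\<tau>=1..k-1. t (k+l-\<tau>) \<gamma> \<beta> * t \<tau> \<alpha> \<epsilon>))
                - h * ((\<Sum>\<sigma>=1..l. t (k+\<sigma>) \<gamma> \<beta> * t (l-\<sigma>) \<alpha> \<epsilon>)
                       - (\<Sum>\<sigma>=1..l-1. t \<sigma> \<gamma> \<beta> * t (k+l-\<sigma>) \<alpha> \<epsilon>))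
                else 0)))"
  using pbr_trZ[OF pd_tf_Xc] pbr_tf_tf unfolding Let_def by blast

end
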